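(* Let $f$ and $\tau$ be as in the context. Suppose that for some $x\in\mathbb T^1$, $n\in\mathbb N$ and inverse branches $h_1,h_2\in\mathcal H^n$ with $x$ in both their domains, $$DF^n_{h_1(x)}\mathcal K_\eta\cap DF^n_{h_2(x)}\mathcal K_\eta=\{0\}.$$ Then there exists $C_0=C_0(n,x)>0$ such that $|(\tau_n\circ h_1)'(x)-(\tau_n\circ h_2)'(x)|>C_0$.
   Context: $\alpha\in(0,1)$, $\mathbb T^1=\mathbb R/\mathbb Z$. $f:\mathbb T^1\to\mathbb T^1$ is piecewise $C^{1+\alpha}$ on a countable partition into open intervals, with inverse branches $\mathcal H^n$ of $f^n$, partition $\{O_h\}_{h\in\mathcal H^n}$, $h:f^n(O_h)\to O_h$, $|(f^n)'|\ge e^{\lambda n}$ with $\lambda>\ln2$. $\tau:\mathbb T^1\to\mathbb R$ is piecewise $C^1$ with $|(\tau_n\circ h)'|\le C_\tau$ for all $n$, $h\in\mathcal H^n$, where $\tau_n=\sum_{j<n}\tau\circ f^j$. $F(x,y)=(f(x),y+\tau(x))$, $DF_{(x,y)}=\begin{pmatrix}f'(x)&0\\\tau'(x)&1\end{pmatrix}$ (independent of $y$), $DF^n_x=DF_{f^{n-1}x}\cdots DF_x$. $\eta=\|\tau'/f'\|_\infty/(1-\|1/f'\|_\infty)$, $\mathcal K_\eta=\{(u,v):|v|\le\eta|u|\}$. *)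

theory Defs
  imports "HOL-Analysis.Analysis"
begin

(* Model of T^1 = R/Z: points are reals, functions on T^1 are 1-periodic functions
   on R.  The map f : T^1 -> T^1 is represented by a 1-periodic f : real => real whose
   values are read modulo 1 (so f is locally a lift and derivatives make sense). *)

definition periodic1 :: "(real \<Rightarrow> real) \<Rightarrow> bool" where
  "periodic1 g \<longleftrightarrow> (\<forall>x. g (x + 1) = g x)"

(* countable partition of T^1 into open intervals, lifted to R (translation invariant),
   covering T^1 up to a Lebesgue null set *)
definition interval_partition :: "real set set \<Rightarrow> bool" where
  "interval_partition P \<longleftrightarrow>
     countable P \<and>
     (\<forall>I\<in>P. \<exists>a b. a < b \<and> b - a \<le> 1 \<and> I = {a<..<b}) \<and>
     (\<forall>I\<in>P. (\<lambda>x. x + 1) ` I \<in> P \<and> (\<lambda>x. x - 1) ` I \<in> P) \<and>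
     (\<forall>I\<in>P. \<forall>J\<in>P. I \<noteq> J \<longrightarrow> I \<inter> J = {}) \<and>
     (UNIV - \<Union>P) \<in> null_sets lborel"

definition piecewise_C1_alpha :: "real \<Rightarrow> (real \<Rightarrow> real) \<Rightarrow> real set set \<Rightarrow> bool" where
  "piecewise_C1_alpha \<alpha> g P \<longleftrightarrow>
     (\<forall>I\<in>P. (\<forall>x\<in>I. g differentiable (at x)) \<and>
        (\<exists>C. \<forall>x\<in>I. \<forall>y\<in>I. \<bar>deriv g x - deriv g y\<bar> \<le> C * \<bar>x - y\<bar> powr \<alpha>))"

definition piecewise_C1 :: "(real \<Rightarrow> real) \<Rightarrow> real set set \<Rightarrow> bool" where
  "piecewise_C1 g P \<longleftrightarrow>
     (\<forall>I\<in>P. (\<forall>x\<in>I. g differentiable (at x)) \<and> continuous_on I (deriv g))"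

definition injective_mod1_on_pieces :: "(real \<Rightarrow> real) \<Rightarrow> real set set \<Rightarrow> bool" where
  "injective_mod1_on_pieces g P \<longleftrightarrow>
     (\<forall>I\<in>P. \<forall>x\<in>I. \<forall>y\<in>I. g x - g y \<in> \<int> \<longrightarrow> x = y)"

(* the partition {O_h} for f^n: the (nonempty) n-cylinders *)
definition cylinders :: "(real \<Rightarrow> real) \<Rightarrow> real set set \<Rightarrow> nat \<Rightarrow> real set set" where
  "cylinders f P n = {Q. Q \<noteq> {} \<and>
     (\<exists>Is :: nat \<Rightarrow> real set. (\<forall>j<n. Is j \<in> P) \<and> Q = {x. \<forall>j<n. (f ^^ j) x \<in> Is j})}"

(* domain f^n(O_h) (as a subset of T^1, lifted to R) and the inverse branch h *)
definition branch_dom :: "(real \<Rightarrow> real) \<Rightarrow> nat \<Rightarrow> real set \<Rightarrow> real set" where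
  "branch_dom f n Q = {z. \<exists>y\<in>Q. (f ^^ n) y - z \<in> \<int>}"

definition branch :: "(real \<Rightarrow> real) \<Rightarrow> nat \<Rightarrow> real set \<Rightarrow> real \<Rightarrow> real" where
  "branch f n Q z = (THE y. y \<in> Q \<and> (f ^^ n) y - z \<in> \<int>)"

definition tau_n :: "(real \<Rightarrow> real) \<Rightarrow> (real \<Rightarrow> real) \<Rightarrow> nat \<Rightarrow> real \<Rightarrow> real" where
  "tau_n f \<tau> n x = (\<Sum>j<n. \<tau> ((f ^^ j) x))"

definition DF :: "(real \<Rightarrow> real) \<Rightarrow> (real \<Rightarrow> real) \<Rightarrow> real \<Rightarrow> real \<times> real \<Rightarrow> real \<times> real" where
  "DF f \<tau> x = (\<lambda>(u, v). (deriv f x * u, deriv \<tau> x * u + v))"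

primrec DFn :: "(real \<Rightarrow> real) \<Rightarrow> (real \<Rightarrow> real) \<Rightarrow> nat \<Rightarrow> real \<Rightarrow> real \<times> real \<Rightarrow> real \<times> real" where
  "DFn f \<tau> 0 x = id"
| "DFn f \<tau> (Suc n) x = DF f \<tau> ((f ^^ n) x) \<circ> DFn f \<tau> n x"

(* sup norm over the (full measure) union of the partition intervals *)
definition supnorm :: "(real \<Rightarrow> real) \<Rightarrow> real set set \<Rightarrow> real" where
  "supnorm g P = Sup ((\<lambda>x. \<bar>g x\<bar>) ` \<Union>P)"

definition eta :: "(real \<Rightarrow> real) \<Rightarrow> (real \<Rightarrow> real) \<Rightarrow> real set set \<Rightarrow> real" where
  "eta f \<tau> P = supnorm (\<lambda>x. deriv \<tau> x / deriv f x) P / (1 - supnorm (\<lambda>x. 1 / deriv f x) P)"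

definition cone :: "real \<Rightarrow> (real \<times> real) set" where
  "cone \<eta> = {(u, v). \<bar>v\<bar> \<le> \<eta> * \<bar>u\<bar>}"

end

theory Submission
  imports Defs "HOL-Complex_Analysis.Conformal_Mappings"
begin

text \<open>
  Along an orbit, DF^n_y is the lower triangular matrix with diagonal ((f^n)'(y), 1) and
  lower-left entry \<tau>_n'(y), while the inverse function theorem gives
  (\<tau>_n \<circ> h)'(x) = \<tau>_n'(y) / (f^n)'(y) for y = h(x).  If the two branches had the same
  slope, the vector ((f^n)'(h1 x), \<tau>_n'(h1 x)) = DF^n_{h1 x}(1,0) would also be the image
  of the horizontal vector ((f^n)'(h1 x)/(f^n)'(h2 x), 0) under DF^n_{h2 x}; horizontal
  vectors lie in the cone because \<eta> \<ge> 0, contradicting transversality.  So the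
  difference of the slopes is nonzero and half of it serves as C0.
\<close>

definition funpow_deriv :: "(real \<Rightarrow> real) \<Rightarrow> nat \<Rightarrow> real \<Rightarrow> real" where
  "funpow_deriv f m y = (\<Prod>j<m. deriv f ((f ^^ j) y))"

definition birkhoff_deriv :: "(real \<Rightarrow> real) \<Rightarrow> (real \<Rightarrow> real) \<Rightarrow> nat \<Rightarrow> real \<Rightarrow> real" where
  "birkhoff_deriv f \<tau> m y = (\<Sum>j<m. deriv \<tau> ((f ^^ j) y) * funpow_deriv f j y)"

lemma funpow_deriv_Suc:
  "funpow_deriv f (Suc m) y = deriv f ((f ^^ m) y) * funpow_deriv f m y"
  by (simp add: funpow_deriv_def mult.commute)

lemma birkhoff_deriv_Suc:
  "birkhoff_deriv f \<tau> (Suc m) y = birkhoff_deriv f \<tau> m y + deriv \<tau> ((f ^^ m) y) * funpow_deriv f m y"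
  by (simp add: birkhoff_deriv_def)

lemma DFn_eq:
  "DFn f \<tau> m y = (\<lambda>(u, v). (funpow_deriv f m y * u, birkhoff_deriv f \<tau> m y * u + v))"
  by (induction m)
     (auto simp: DF_def funpow_deriv_Suc birkhoff_deriv_Suc funpow_deriv_def birkhoff_deriv_def
       algebra_simps)

lemma has_real_derivative_funpow:
  assumes "\<forall>j<m. f differentiable at ((f ^^ j) y)"
  shows "DERIV (f ^^ m) y :> funpow_deriv f m y"
  using assms
proof (induction m)
  case 0
  show ?case by (simp add: funpow_deriv_def id_def)
next
  case (Suc m)
  have "DERIV f ((f ^^ m) y) :> deriv f ((f ^^ m) y)"
    using Suc.prems by (simp add: DERIV_deriv_iff_real_differentiable)
  from DERIV_chain2[OF this Suc.IH] Suc.prems show ?case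
    by (simp add: funpow_deriv_Suc comp_def)
qed

lemma has_real_derivative_tau_n:
  assumes "\<forall>j<m. f differentiable at ((f ^^ j) y) \<and> \<tau> differentiable at ((f ^^ j) y)"
  shows "DERIV (tau_n f \<tau> m) y :> birkhoff_deriv f \<tau> m y"
  using assms
proof (induction m)
  case 0
  show ?case by (simp add: tau_n_def birkhoff_deriv_def)
next
  case (Suc m)
  have "DERIV \<tau> ((f ^^ m) y) :> deriv \<tau> ((f ^^ m) y)"
    using Suc.prems by (simp add: DERIV_deriv_iff_real_differentiable)
  from DERIV_add[OF Suc.IH DERIV_chain2[OF this has_real_derivative_funpow]] Suc.prems
  have "DERIV (\<lambda>z. tau_n f \<tau> m z + \<tau> ((f ^^ m) z)) y :> birkhoff_deriv f \<tau> (Suc m) y"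
    by (simp add: birkhoff_deriv_Suc mult.commute)
  then show ?case by (simp add: tau_n_def)
qed

lemma interval_partition_open:
  assumes "interval_partition P" "I \<in> P"
  shows "open I"
proof -
  obtain a b where "I = {a<..<b}" using assms unfolding interval_partition_def by meson
  then show ?thesis by simp
qed

lemma interval_partition_Union_nonempty:
  assumes "interval_partition P"
  shows "\<Union>P \<noteq> {}"
proof
  assume "\<Union>P = {}"
  have "UNIV - \<Union>P \<in> null_sets lborel"
    using assms unfolding interval_partition_def by blast
  then have "(UNIV :: real set) \<in> null_sets lborel" using \<open>\<Union>P = {}\<close> by simp
  then have "{0..1::real} \<in> null_sets lborel" by (rule null_sets_subset) auto
  then show False by (simp add: null_sets_def)
qed

lemma piece_in_cylinders_Suc_0:
  assumes "I \<in> P" "I \<noteq> {}"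
  shows "I \<in> cylinders f P (Suc 0)"
  unfolding cylinders_def using assms by (intro CollectI conjI exI[of _ "\<lambda>_. I"]) auto

lemma cylinder_orbit_in_pieces:
  assumes "Q \<in> cylinders f P m" "y \<in> Q" "j < m"
  shows "(f ^^ j) y \<in> \<Union>P"
  using assms unfolding cylinders_def by blast

lemma deriv_funpow_cylinder:
  assumes "\<forall>x\<in>\<Union>P. f differentiable at x" "Q \<in> cylinders f P m" "y \<in> Q"
  shows "DERIV (f ^^ m) y :> funpow_deriv f m y"
  using assms cylinder_orbit_in_pieces by (metis has_real_derivative_funpow)

lemma open_cylinder:
  assumes "\<forall>I\<in>P. open I" "\<forall>x\<in>\<Union>P. f differentiable at x" "Q \<in> cylinders f P m"
  shows "open Q"
proof -
  obtain Is where Is: "\<forall>j<m. Is j \<in> P" and Q: "Q = {x. \<forall>j<m. (f ^^ j) x \<in> Is j}"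
    using assms(3) unfolding cylinders_def by blast
  show ?thesis
  proof (rule Topological_Spaces.openI)
    fix y assume "y \<in> Q"
    have "\<forall>\<^sub>F x in nhds y. (f ^^ j) x \<in> Is j" if "j < m" for j
    proof (rule topological_tendstoD)
      have "\<forall>i<j. f differentiable at ((f ^^ i) y)"
        using assms(2,3) \<open>y \<in> Q\<close> that cylinder_orbit_in_pieces by (meson less_trans)
      then show "((f ^^ j) \<longlongrightarrow> (f ^^ j) y) (nhds y)"
        using DERIV_isCont[OF has_real_derivative_funpow]
        by (simp add: isCont_def tendsto_at_iff_tendsto_nhds)
      show "open (Is j)" "(f ^^ j) y \<in> Is j" using Is Q \<open>y \<in> Q\<close> assms(1) that by auto
    qed
    then have "\<forall>\<^sub>F x in nhds y. \<forall>j\<in>{..<m}. (f ^^ j) x \<in> Is j"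
      by (simp add: eventually_ball_finite_distrib)
    then have "\<forall>\<^sub>F x in nhds y. x \<in> Q"
      unfolding Q by (rule eventually_mono) auto
    then show "\<exists>T. open T \<and> y \<in> T \<and> T \<subseteq> Q"
      unfolding eventually_nhds by auto
  qed
qed

lemma funpow_eq_if_same_pieces_mod1:
  assumes "injective_mod1_on_pieces f P" "\<forall>j\<le>k. Is j \<in> P"
    "\<forall>j\<le>k. (f ^^ j) y \<in> Is j" "\<forall>j\<le>k. (f ^^ j) y' \<in> Is j"
    "(f ^^ Suc k) y - (f ^^ Suc k) y' \<in> \<int>"
  shows "y = y'"
  using assms(2-5)
proof (induction k)
  case 0
  then have "Is 0 \<in> P" "y \<in> Is 0" "y' \<in> Is 0" "f y - f y' \<in> \<int>" by simp_all
  then show ?case using assms(1) unfolding injective_mod1_on_pieces_def by blast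
next
  case (Suc k)
  have "f ((f ^^ Suc k) y) - f ((f ^^ Suc k) y') \<in> \<int>"
    using Suc.prems(4) by (simp only: funpow.simps comp_apply)
  moreover have "Is (Suc k) \<in> P" "(f ^^ Suc k) y \<in> Is (Suc k)" "(f ^^ Suc k) y' \<in> Is (Suc k)"
    using Suc.prems(1-3) by blast+
  ultimately have "(f ^^ Suc k) y = (f ^^ Suc k) y'"
    using assms(1) unfolding injective_mod1_on_pieces_def by blast
  then have "(f ^^ Suc k) y - (f ^^ Suc k) y' \<in> \<int>" by simp
  moreover have "\<forall>j\<le>k. Is j \<in> P" "\<forall>j\<le>k. (f ^^ j) y \<in> Is j" "\<forall>j\<le>k. (f ^^ j) y' \<in> Is j"
    using Suc.prems(1-3) by simp_all
  ultimately show ?case by (rule Suc.IH[rotated 3])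
qed

lemma branch_eqI:
  assumes "injective_mod1_on_pieces f P" "Q \<in> cylinders f P (Suc k)" "y \<in> Q"
    "(f ^^ Suc k) y - z \<in> \<int>"
  shows "branch f (Suc k) Q z = y"
  unfolding branch_def
proof (rule the_equality)
  show "y \<in> Q \<and> (f ^^ Suc k) y - z \<in> \<int>" using assms(3,4) ..
next
  fix y' assume y': "y' \<in> Q \<and> (f ^^ Suc k) y' - z \<in> \<int>"
  obtain Is where "\<forall>j<Suc k. Is j \<in> P" and Q: "Q = {x. \<forall>j<Suc k. (f ^^ j) x \<in> Is j}"
    using assms(2) unfolding cylinders_def by blast
  moreover have "(f ^^ Suc k) y' - (f ^^ Suc k) y \<in> \<int>"
    using Ints_diff[OF conjunct2[OF y'] assms(4)] by simp
  ultimately show "y' = y"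
    using funpow_eq_if_same_pieces_mod1[OF assms(1)] y' assms(3) by (simp add: less_Suc_eq_le)
qed

lemma branch_mem_cylinder:
  assumes "injective_mod1_on_pieces f P" "Q \<in> cylinders f P (Suc k)"
    "z \<in> branch_dom f (Suc k) Q"
  shows "branch f (Suc k) Q z \<in> Q \<and> (f ^^ Suc k) (branch f (Suc k) Q z) - z \<in> \<int>"
proof -
  obtain y where "y \<in> Q" "(f ^^ Suc k) y - z \<in> \<int>"
    using assms(3) unfolding branch_dom_def by blast
  with branch_eqI[OF assms(1,2)] show ?thesis by simp
qed

lemma has_real_derivative_tau_n_branch:
  assumes "\<forall>I\<in>P. open I" "\<forall>x\<in>\<Union>P. f differentiable at x \<and> \<tau> differentiable at x"
    and "injective_mod1_on_pieces f P" "Q \<in> cylinders f P (Suc k)" "y \<in> Q"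
    and "(f ^^ Suc k) y - z \<in> \<int>" "funpow_deriv f (Suc k) y \<noteq> 0"
  shows "DERIV (\<lambda>w. tau_n f \<tau> (Suc k) (branch f (Suc k) Q w)) z
           :> birkhoff_deriv f \<tau> (Suc k) y / funpow_deriv f (Suc k) y"
proof -
  define F where "F = (\<lambda>t. (f ^^ Suc k) t - ((f ^^ Suc k) y - z))"
  have orbit: "\<forall>j<Suc k. f differentiable at ((f ^^ j) y) \<and> \<tau> differentiable at ((f ^^ j) y)"
    using assms(2,4,5) cylinder_orbit_in_pieces by blast
  have F_deriv: "DERIV F t :> funpow_deriv f (Suc k) t" if "t \<in> Q" for t
  proof -
    have "\<forall>x\<in>\<Union>P. f differentiable at x" using assms(2) by blast
    from deriv_funpow_cylinder[OF this assms(4) that]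
    show ?thesis unfolding F_def using DERIV_diff DERIV_const by fastforce
  qed
  have "continuous_on Q F"
    using F_deriv DERIV_isCont by (blast intro: continuous_at_imp_continuous_on)
  moreover have "branch f (Suc k) Q (F t) = t" if "t \<in> Q" for t
    by (rule branch_eqI[OF assms(3,4) that]) (use assms(6) in \<open>simp add: F_def\<close>)
  moreover have "open Q" using open_cylinder assms(1,2,4) by blast
  ultimately have "DERIV (branch f (Suc k) Q) (F y) :> inverse (funpow_deriv f (Suc k) y)"
    using has_field_derivative_inverse_strong[OF F_deriv] assms(5,7) by blast
  moreover have "F y = z" "branch f (Suc k) Q z = y"
    using branch_eqI[OF assms(3-6)] by (simp_all add: F_def)
  moreover have "DERIV (tau_n f \<tau> (Suc k)) y :> birkhoff_deriv f \<tau> (Suc k) y"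
    using has_real_derivative_tau_n[OF orbit] .
  ultimately show ?thesis
    by (metis DERIV_chain2 divide_inverse)
qed

lemma deriv_tau_n_branch:
  assumes "\<forall>I\<in>P. open I" "\<forall>x\<in>\<Union>P. f differentiable at x \<and> \<tau> differentiable at x"
    and "injective_mod1_on_pieces f P" "Q \<in> cylinders f P (Suc k)"
    and "\<forall>y\<in>Q. deriv (f ^^ Suc k) y \<noteq> 0" "z \<in> branch_dom f (Suc k) Q"
  defines "y \<equiv> branch f (Suc k) Q z"
  shows "funpow_deriv f (Suc k) y \<noteq> 0 \<and>
    deriv (\<lambda>w. tau_n f \<tau> (Suc k) (branch f (Suc k) Q w)) z
      = birkhoff_deriv f \<tau> (Suc k) y / funpow_deriv f (Suc k) y"
proof -
  have y: "y \<in> Q" "(f ^^ Suc k) y - z \<in> \<int>"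
    using branch_mem_cylinder[OF assms(3,4,6)] unfolding y_def by simp_all
  have "\<forall>x\<in>\<Union>P. f differentiable at x" using assms(2) by blast
  then have "deriv (f ^^ Suc k) y = funpow_deriv f (Suc k) y"
    using DERIV_imp_deriv deriv_funpow_cylinder assms(4) y(1) by blast
  with assms(5) y(1) have "funpow_deriv f (Suc k) y \<noteq> 0" by metis
  with has_real_derivative_tau_n_branch[OF assms(1-4) y] show ?thesis
    using DERIV_imp_deriv by blast
qed

lemma piece_deriv_bounds:
  assumes "\<forall>I\<in>P. open I" "\<forall>x\<in>\<Union>P. f differentiable at x \<and> \<tau> differentiable at x"
    and "injective_mod1_on_pieces f P"
    and "\<forall>m. \<forall>Q\<in>cylinders f P m. \<forall>y\<in>Q. \<bar>deriv (f ^^ m) y\<bar> \<ge> exp (lam * real m)"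
    and "\<forall>m. \<forall>Q\<in>cylinders f P m. \<forall>z\<in>branch_dom f m Q.
           \<bar>deriv (\<lambda>w. tau_n f \<tau> m (branch f m Q w)) z\<bar> \<le> C\<tau>"
    and "y \<in> \<Union>P"
  shows "exp lam \<le> \<bar>deriv f y\<bar> \<and> \<bar>deriv \<tau> y / deriv f y\<bar> \<le> C\<tau>"
proof -
  obtain I where "I \<in> P" "y \<in> I" using assms(6) by blast
  then have I: "I \<in> cylinders f P (Suc 0)" by (auto intro: piece_in_cylinders_Suc_0)
  have expanding: "exp lam \<le> \<bar>deriv (f ^^ Suc 0) t\<bar>" if "t \<in> I" for t
    using assms(4) I that by fastforce
  have "f y \<in> branch_dom f (Suc 0) I" unfolding branch_dom_def using \<open>y \<in> I\<close> by force
  moreover have "branch f (Suc 0) I (f y) = y"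
    using branch_eqI[OF assms(3) I \<open>y \<in> I\<close>] by simp
  moreover have "\<forall>t\<in>I. deriv (f ^^ Suc 0) t \<noteq> 0"
    using expanding by (metis abs_zero exp_gt_zero not_le)
  ultimately have "deriv (\<lambda>w. tau_n f \<tau> (Suc 0) (branch f (Suc 0) I w)) (f y) = deriv \<tau> y / deriv f y"
    using deriv_tau_n_branch[OF assms(1-3) I]
    by (simp add: funpow_deriv_def birkhoff_deriv_def)
  with assms(5) I \<open>f y \<in> branch_dom f (Suc 0) I\<close> expanding[OF \<open>y \<in> I\<close>] show ?thesis
    by fastforce
qed

lemma eta_nonneg:
  assumes "\<Union>P \<noteq> {}" "1 < c" "\<forall>y\<in>\<Union>P. c \<le> \<bar>deriv f y\<bar>"
    and "\<forall>y\<in>\<Union>P. \<bar>deriv \<tau> y / deriv f y\<bar> \<le> C"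
  shows "0 \<le> eta f \<tau> P"
proof -
  obtain y where y: "y \<in> \<Union>P" using assms(1) by blast
  have "\<bar>deriv \<tau> y / deriv f y\<bar> \<le> supnorm (\<lambda>x. deriv \<tau> x / deriv f x) P"
    unfolding supnorm_def using assms(4) y by (intro cSup_upper bdd_aboveI2[of _ _ C]) auto
  then have numerator: "0 \<le> supnorm (\<lambda>x. deriv \<tau> x / deriv f x) P" by linarith
  have "supnorm (\<lambda>x. 1 / deriv f x) P \<le> 1 / c"
    unfolding supnorm_def
  proof (rule cSup_least)
    show "(\<lambda>x. \<bar>1 / deriv f x\<bar>) ` \<Union>P \<noteq> {}" using assms(1) by simp
  next
    fix r assume "r \<in> (\<lambda>x. \<bar>1 / deriv f x\<bar>) ` \<Union>P"
    then obtain x where "x \<in> \<Union>P" and r: "r = 1 / \<bar>deriv f x\<bar>" by auto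
    then have "c \<le> \<bar>deriv f x\<bar>" using assms(3) by blast
    with assms(2) show "r \<le> 1 / c" unfolding r by (intro divide_left_mono) auto
  qed
  also have "\<dots> < 1" using assms(2) by simp
  finally have "supnorm (\<lambda>x. 1 / deriv f x) P < 1" .
  with numerator show ?thesis unfolding eta_def by simp
qed

lemma cone_images_transverse_imp_slopes_ne:
  fixes \<eta> a1 a2 b1 b2 :: real
  assumes "0 \<le> \<eta>" "a1 \<noteq> 0" "a2 \<noteq> 0"
    and "(\<lambda>(u, v). (a1 * u, b1 * u + v)) ` cone \<eta> \<inter> (\<lambda>(u, v). (a2 * u, b2 * u + v)) ` cone \<eta>
           = {(0, 0)}"
  shows "b1 / a1 \<noteq> b2 / a2"
proof
  assume slopes: "b1 / a1 = b2 / a2"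
  have horizontal: "(t, 0) \<in> cone \<eta>" for t using assms(1) by (simp add: cone_def)
  have "(a1, b1) = (\<lambda>(u, v). (a1 * u, b1 * u + v)) (1, 0)" by simp
  moreover have "(a1, b1) = (\<lambda>(u, v). (a2 * u, b2 * u + v)) (a1 / a2, 0)"
    using slopes assms(2,3) by (simp add: field_simps)
  ultimately have "(a1, b1) \<in> (\<lambda>(u, v). (a1 * u, b1 * u + v)) ` cone \<eta>
      \<inter> (\<lambda>(u, v). (a2 * u, b2 * u + v)) ` cone \<eta>"
    using horizontal by blast
  with assms(2,4) show False by simp
qed

theorem mainTheorem8:
  fixes \<alpha> lam C\<tau> :: real and f \<tau> :: "real \<Rightarrow> real" and P :: "real set set"
    and x :: real and n :: nat and Q1 Q2 :: "real set"
  assumes "0 < \<alpha>" "\<alpha> < 1"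
    and "periodic1 f" "periodic1 \<tau>"
    and "interval_partition P"
    and "piecewise_C1_alpha \<alpha> f P"
    and "injective_mod1_on_pieces f P"
    and "lam > ln 2"
    and "\<forall>m. \<forall>Q\<in>cylinders f P m. \<forall>y\<in>Q. \<bar>deriv (f ^^ m) y\<bar> \<ge> exp (lam * real m)"
    and "piecewise_C1 \<tau> P"
    and "\<forall>m. \<forall>Q\<in>cylinders f P m. \<forall>z\<in>branch_dom f m Q.
           \<bar>deriv (\<lambda>w. tau_n f \<tau> m (branch f m Q w)) z\<bar> \<le> C\<tau>"
    and "Q1 \<in> cylinders f P n" "Q2 \<in> cylinders f P n"
    and "x \<in> branch_dom f n Q1" "x \<in> branch_dom f n Q2"
    and "DFn f \<tau> n (branch f n Q1 x) ` cone (eta f \<tau> P)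
           \<inter> DFn f \<tau> n (branch f n Q2 x) ` cone (eta f \<tau> P) = {(0, 0)}"
  shows "\<exists>C0 > 0. \<bar>deriv (\<lambda>w. tau_n f \<tau> n (branch f n Q1 w)) x
                   - deriv (\<lambda>w. tau_n f \<tau> n (branch f n Q2 w)) x\<bar> > C0"
proof -
  have pieces_open: "\<forall>I\<in>P. open I" using assms(5) interval_partition_open by blast
  have pieces_differentiable: "\<forall>x\<in>\<Union>P. f differentiable at x \<and> \<tau> differentiable at x"
    using assms(6,10) unfolding piecewise_C1_alpha_def piecewise_C1_def by blast
  have "0 < lam" using assms(8) ln_gt_zero[of "2::real"] by linarith
  then have "1 < exp lam" by simp
  then have eta: "0 \<le> eta f \<tau> P"
    using eta_nonneg[OF interval_partition_Union_nonempty[OF assms(5)]]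
      piece_deriv_bounds[OF pieces_open pieces_differentiable assms(7,9,11)] by blast
  have "n \<noteq> 0"
  proof
    assume "n = 0"
    with assms(16) have "cone (eta f \<tau> P) = {(0, 0)}" by simp
    moreover have "(1, 0) \<in> cone (eta f \<tau> P)" using eta by (simp add: cone_def)
    ultimately show False by simp
  qed
  then obtain k where n: "n = Suc k" using not0_implies_Suc by blast
  have "\<forall>Q\<in>cylinders f P n. \<forall>y\<in>Q. deriv (f ^^ n) y \<noteq> 0"
    using assms(9) by (metis abs_zero exp_gt_zero not_le)
  then have slope: "funpow_deriv f n (branch f n Q x) \<noteq> 0 \<and>
      deriv (\<lambda>w. tau_n f \<tau> n (branch f n Q w)) x
        = birkhoff_deriv f \<tau> n (branch f n Q x) / funpow_deriv f n (branch f n Q x)"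
    if "Q \<in> cylinders f P n" "x \<in> branch_dom f n Q" for Q
    using deriv_tau_n_branch[OF pieces_open pieces_differentiable assms(7)] that unfolding n
    by blast
  have "deriv (\<lambda>w. tau_n f \<tau> n (branch f n Q1 w)) x \<noteq> deriv (\<lambda>w. tau_n f \<tau> n (branch f n Q2 w)) x"
    using cone_images_transverse_imp_slopes_ne[OF eta] assms(16)
      slope[OF assms(12,14)] slope[OF assms(13,15)] by (simp add: DFn_eq)
  then show ?thesis by (intro exI[of _ "\<bar>deriv (\<lambda>w. tau_n f \<tau> n (branch f n Q1 w)) x
    - deriv (\<lambda>w. tau_n f \<tau> n (branch f n Q2 w)) x\<bar> / 2"]) auto
qed

end
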